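(* Let $\Omega>0$, $M\ge 2$, $\omega_q=-\Omega+(q-1)\frac{2\Omega}{M-1}$ for $q=1,\dots,M$. For given $0<\sigma<m_{\min}$ and integer $n\geq 2$, let $$\tau=\frac{0.49e^{-3/2}}{\Omega}\Big(\frac{\sigma}{m_{\min}}\Big)^{\frac{1}{2n-1}}.$$ Then there exist a measure $\mu=\sum_{j=1}^n a_j\delta_{y_j}$ with supports $\{-\tau,-2\tau,\dots,-n\tau\}$ and a measure $\hat\mu=\sum_{j=1}^n\hat a_j\delta_{\hat y_j}$ with supports $\{0,\tau,\dots,(n-1)\tau\}$ such that $\|[\hat\mu]-[\mu]\|_\infty<\sigma$ and either $\min_{1\le j\le n}|a_j|=m_{\min}$ or $\min_{1\le j\le n}|\hat a_j|=m_{\min}$.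
   Context: For a discrete measure $\nu=\sum_j b_j\delta_{x_j}$ on $\mathbb R$, $\mathcal F\nu(\omega)=\sum_j b_je^{ix_j\omega}$ and $[\nu]=(\mathcal F\nu(\omega_1),\dots,\mathcal F\nu(\omega_M))^T\in\mathbb C^M$. *)

theory Defs
  imports "HOL-Analysis.Analysis"
begin

definition dm_fourier :: "nat \<Rightarrow> (nat \<Rightarrow> complex) \<Rightarrow> (nat \<Rightarrow> real) \<Rightarrow> real \<Rightarrow> complex" where
  "dm_fourier n b x w = (\<Sum>j=1..n. b j * exp (\<i> * complex_of_real (x j * w)))"

definition meas_dist_inf ::
  "nat \<Rightarrow> (nat \<Rightarrow> real) \<Rightarrow> nat \<Rightarrow> (nat \<Rightarrow> complex) \<Rightarrow> (nat \<Rightarrow> real)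
     \<Rightarrow> (nat \<Rightarrow> complex) \<Rightarrow> (nat \<Rightarrow> real) \<Rightarrow> real" where
  "meas_dist_inf M w n b x b' x' =
     Max ((\<lambda>q. cmod (dm_fourier n b x (w q) - dm_fourier n b' x' (w q))) ` {1..M})"

end

theory Submission imports Defs begin

text \<open>Let \<open>c k = (-1)^k (2n-1 choose k)\<close> be the coefficients of \<open>(1 - z)^(2n-1)\<close> and take
  weights \<open>m c (n+j-1)\<close> at the nodes \<open>(j-1)\<tau>\<close> and \<open>-m c (n-j)\<close> at the nodes \<open>-j\<tau>\<close>. With
  \<open>z = exp (i \<tau> \<omega>)\<close> the Fourier transforms of the two measures, divided by \<open>m\<close> and \<open>-m\<close>,
  are the parts of nonnegative and of negative degree of the Laurent polynomial
  \<open>z^(-n) (1 - z)^(2n-1)\<close>, so their difference has modulus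
  \<open>m |1 - z|^(2n-1) \<le> m (\<tau> \<Omega>)^(2n-1)\<close>. The choice of \<open>\<tau>\<close> makes this smaller than \<open>\<sigma>\<close>; only
  \<open>0.49 exp (-3/2) < 1\<close> matters here. The weight at \<open>-n\<tau>\<close> has modulus \<open>m |c 0| = m\<close>, the
  smallest one.\<close>

definition binomial_coeff_one_minus :: "nat \<Rightarrow> nat \<Rightarrow> 'a::comm_ring_1" where
  "binomial_coeff_one_minus N k = (-1)^k * of_nat (N choose k)"

lemma binomial_coeff_one_minus_eq_0_iff [simp]:
  "(binomial_coeff_one_minus N k = (0::'a::{idom,ring_char_0})) \<longleftrightarrow> N < k"
  by (simp add: binomial_coeff_one_minus_def)

lemma cmod_binomial_coeff_one_minus [simp]:
  "cmod (binomial_coeff_one_minus N k) = real (N choose k)"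
  by (simp add: binomial_coeff_one_minus_def norm_mult norm_power)

lemma one_minus_power_eq_sum:
  "(1 - z)^N = (\<Sum>k\<le>N. binomial_coeff_one_minus N k * (z::'a::comm_ring_1)^k)"
proof -
  have "(1 - z)^N = (-z + 1)^N" by simp
  also have "\<dots> = (\<Sum>k\<le>N. of_nat (N choose k) * (-z)^k * 1^(N-k))"
    by (rule binomial_ring)
  finally show ?thesis
    unfolding binomial_coeff_one_minus_def power_minus[of z] by (simp add: mult_ac)
qed

lemma sum_lessThan_add_eq_laurent_split:
  fixes z :: "'a::field"
  assumes "z \<noteq> 0"
  shows "(\<Sum>k<n+m. c k * z^k)
           = z^n * ((\<Sum>j=1..m. c (n+j-1) * z^j) / z + (\<Sum>j=1..n. c (n-j) * inverse z ^ j))"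
proof -
  have high: "z^n * ((\<Sum>j=1..m. c (n+j-1) * z^j) / z) = (\<Sum>k=n..<n+m. c k * z^k)"
  proof -
    have "z^n * ((\<Sum>j=1..m. c (n+j-1) * z^j) / z) = (\<Sum>j=1..m. c (n+j-1) * z^(n+j-1))"
      unfolding sum_divide_distrib sum_distrib_left
      using assms by (intro sum.cong) (auto simp: power_add[symmetric] power_diff)
    also have "\<dots> = (\<Sum>k=n..<n+m. c k * z^k)"
      by (rule sum.reindex_bij_witness[of _ "\<lambda>k. k + 1 - n" "\<lambda>j. n + j - 1"]) auto
    finally show ?thesis .
  qed
  have low: "z^n * (\<Sum>j=1..n. c (n-j) * inverse z ^ j) = (\<Sum>k<n. c k * z^k)"
  proof -
    have "z^n * (\<Sum>j=1..n. c (n-j) * inverse z ^ j) = (\<Sum>j=1..n. c (n-j) * z^(n-j))"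
      unfolding sum_distrib_left
      using assms by (intro sum.cong) (auto simp: power_diff power_inverse field_simps)
    also have "\<dots> = (\<Sum>k<n. c k * z^k)"
      by (rule sum.reindex_bij_witness[of _ "\<lambda>k. n - k" "\<lambda>j. n - j"]) auto
    finally show ?thesis .
  qed
  have "{..<n+m} = {..<n} \<union> {n..<n+m}" by auto
  then have "(\<Sum>k<n+m. c k * z^k) = (\<Sum>k<n. c k * z^k) + (\<Sum>k=n..<n+m. c k * z^k)"
    by (simp add: sum.union_disjoint[symmetric] ivl_disj_int)
  then show ?thesis
    unfolding distrib_left high low by (simp add: add.commute)
qed

lemma dm_fourier_shifted_lattice:
  "dm_fourier n b (\<lambda>j. (real j - real s) * t) w
     = (\<Sum>j=1..n. b j * exp (\<i> * of_real (t * w)) ^ j) / exp (\<i> * of_real (t * w)) ^ s"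
  unfolding dm_fourier_def sum_divide_distrib
proof (intro sum.cong refl)
  fix j
  have "\<i> * of_real ((real j - real s) * t * w)
          = of_nat j * (\<i> * of_real (t * w)) - of_nat s * (\<i> * of_real (t * w))"
    by (simp add: algebra_simps)
  then show "b j * exp (\<i> * of_real ((real j - real s) * t * w))
               = b j * exp (\<i> * of_real (t * w)) ^ j / exp (\<i> * of_real (t * w)) ^ s"
    by (simp add: exp_diff exp_of_nat_mult)
qed

lemma cmod_1_minus_exp_ii_le: "cmod (1 - exp (\<i> * of_real t)) \<le> \<bar>t\<bar>"
proof -
  have "cmod (1 - exp (\<i> * of_real t)) = cmod (exp (\<i> * of_real t) - 1)"
    by (simp add: norm_minus_commute)
  also have "\<dots> = 2 * \<bar>sin (t/2)\<bar>" by (rule dist_exp_i_1)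
  also have "\<dots> \<le> \<bar>t\<bar>" using abs_sin_x_le_abs_x[of "t/2"] by simp
  finally show ?thesis .
qed

lemma cmod_dm_fourier_diff_binomial_pair:
  fixes m :: complex and t w :: real and n :: nat
  assumes "n \<ge> 1"
  defines "c \<equiv> binomial_coeff_one_minus (2*n-1)"
  shows "cmod (dm_fourier n (\<lambda>j. m * c (n+j-1)) (\<lambda>j. real j * t - t) w
              - dm_fourier n (\<lambda>j. - m * c (n-j)) (\<lambda>j. - (real j * t)) w)
         = cmod m * cmod (1 - exp (\<i> * of_real (t * w))) ^ (2*n-1)"
proof -
  define z where "z = exp (\<i> * of_real (t * w))"
  have z: "z \<noteq> 0" "cmod z = 1" by (simp_all add: z_def)
  have inverse_z: "exp (\<i> * of_real (- t * w)) = inverse z"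
    by (simp add: z_def exp_minus[symmetric])
  have nodes: "(\<lambda>j. real j * t - t) = (\<lambda>j. (real j - real 1) * t)"
    "(\<lambda>j. - (real j * t)) = (\<lambda>j. (real j - real 0) * - t)"
    by (auto simp: algebra_simps)
  define D where "D = dm_fourier n (\<lambda>j. m * c (n+j-1)) (\<lambda>j. real j * t - t) w
                      - dm_fourier n (\<lambda>j. - m * c (n-j)) (\<lambda>j. - (real j * t)) w"
  define L where "L = (\<Sum>j=1..n. c (n+j-1) * z^j) / z + (\<Sum>j=1..n. c (n-j) * inverse z ^ j)"
  have "D = (\<Sum>j=1..n. m * c (n+j-1) * z^j) / z - (\<Sum>j=1..n. - m * c (n-j) * inverse z ^ j)"
    unfolding D_def nodes dm_fourier_shifted_lattice inverse_z by (simp add: z_def)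
  then have D: "D = m * L"
    by (simp add: L_def sum_distrib_left sum_divide_distrib algebra_simps sum_negf)
  have "{..2*n-1} = {..<n+n}" using assms by auto
  then have L: "z^n * L = (1 - z)^(2*n-1)"
    using sum_lessThan_add_eq_laurent_split[OF z(1), of c n n]
    by (simp add: L_def one_minus_power_eq_sum c_def)
  have "cmod D = cmod m * cmod (z^n * L)" by (simp add: D norm_mult norm_power z)
  also have "\<dots> = cmod m * cmod (1 - z) ^ (2*n-1)" by (simp add: L norm_power)
  finally show ?thesis by (simp add: D_def z_def)
qed

lemma cmod_dm_fourier_diff_binomial_pair_le:
  fixes m :: complex and t w \<Omega> :: real and n :: nat
  assumes "n \<ge> 1" "t \<ge> 0" "\<bar>w\<bar> \<le> \<Omega>"
  defines "c \<equiv> binomial_coeff_one_minus (2*n-1)"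
  shows "cmod (dm_fourier n (\<lambda>j. m * c (n+j-1)) (\<lambda>j. real j * t - t) w
              - dm_fourier n (\<lambda>j. - m * c (n-j)) (\<lambda>j. - (real j * t)) w)
         \<le> cmod m * (t * \<Omega>) ^ (2*n-1)"
proof -
  have "\<bar>t * w\<bar> \<le> t * \<Omega>"
    using assms by (simp add: abs_mult mult_left_mono)
  then have "cmod (1 - exp (\<i> * of_real (t * w))) \<le> t * \<Omega>"
    using cmod_1_minus_exp_ii_le order_trans by blast
  then show ?thesis
    unfolding c_def cmod_dm_fourier_diff_binomial_pair[OF assms(1)]
    by (intro mult_left_mono power_mono) auto
qed

lemma Min_scaled_binomial_coeffs:
  fixes r :: real
  assumes "r \<ge> 0" "1 \<le> n" "n \<le> N + 1"
  shows "Min ((\<lambda>j. r * real (N choose (n - j))) ` {1..n}) = r"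
proof (rule Min_eqI)
  show "r \<le> y" if y: "y \<in> (\<lambda>j. r * real (N choose (n - j))) ` {1..n}" for y
  proof -
    obtain j where "j \<in> {1..n}" "y = r * real (N choose (n - j))" using y by blast
    moreover from this have "N choose (n - j) \<ge> 1" using assms by (simp add: Suc_le_eq le_diff_conv)
    ultimately show ?thesis using assms(1) by (simp add: mult_le_cancel_left1)
  qed
  show "r \<in> (\<lambda>j. r * real (N choose (n - j))) ` {1..n}"
    using assms by (intro image_eqI[of _ _ n]) auto
qed simp

lemma abs_equispaced_grid_le:
  fixes \<Omega> :: real
  assumes "\<Omega> > 0" "M \<ge> 2" "q \<in> {1..M}"
  shows "\<bar>- \<Omega> + (real q - 1) * (2 * \<Omega> / (real M - 1))\<bar> \<le> \<Omega>"
proof -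
  define t where "t = (real q - 1) / (real M - 1)"
  have "0 \<le> t" "t \<le> 1" using assms by (auto simp: t_def)
  moreover have "- \<Omega> + (real q - 1) * (2 * \<Omega> / (real M - 1)) = \<Omega> * (2 * t - 1)"
    by (simp add: t_def algebra_simps)
  ultimately show ?thesis
    using assms(1) by (simp add: abs_mult abs_le_iff)
qed

lemma mult_power_scaled_root_less:
  fixes c \<sigma> m :: real
  assumes "0 \<le> c" "c < 1" "0 < \<sigma>" "0 < m" "N \<ge> 1"
  shows "m * (c * (\<sigma> / m) powr (1 / real N)) ^ N < \<sigma>"
proof -
  have "m * (c * (\<sigma> / m) powr (1 / real N)) ^ N = c ^ N * \<sigma>"
    using assms by (simp add: power_mult_distrib powr_power)
  also have "\<dots> < \<sigma>"
    using assms by (simp add: power_less_one_iff)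
  finally show ?thesis .
qed

theorem proposition2p2:
  fixes \<Omega> \<sigma> m_min :: real and M n :: nat
  assumes "\<Omega> > 0" and "M \<ge> 2" and "0 < \<sigma>" and "\<sigma> < m_min" and "n \<ge> 2"
  defines "\<omega> \<equiv> (\<lambda>q::nat. - \<Omega> + (real q - 1) * (2 * \<Omega> / (real M - 1)))"
      and "\<tau> \<equiv> 0.49 * exp (- 3 / 2) / \<Omega> * (\<sigma> / m_min) powr (1 / (2 * real n - 1))"
  shows "\<exists>a ah :: nat \<Rightarrow> complex.
           (\<forall>j\<in>{1..n}. a j \<noteq> 0 \<and> ah j \<noteq> 0) \<and>
           meas_dist_inf M \<omega> n ah (\<lambda>j. real j * \<tau> - \<tau>) a (\<lambda>j. - (real j * \<tau>)) < \<sigma> \<and>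
           (Min ((\<lambda>j. cmod (a j)) ` {1..n}) = m_min \<or> Min ((\<lambda>j. cmod (ah j)) ` {1..n}) = m_min)"
proof -
  define N where "N = 2*n - 1"
  define c where "c = (binomial_coeff_one_minus N :: nat \<Rightarrow> complex)"
  define a where "a = (\<lambda>j. - of_real m_min * c (n-j))"
  define ah where "ah = (\<lambda>j. of_real m_min * c (n+j-1))"
  have m_min: "m_min > 0" using assms by simp
  have N: "N \<ge> 1" "real N = 2 * real n - 1" using assms by (auto simp: N_def)
  have cmod_a: "(\<lambda>j. cmod (a j)) = (\<lambda>j. m_min * real (N choose (n-j)))"
    using m_min by (simp add: a_def c_def norm_mult)
  have "\<forall>j\<in>{1..n}. a j \<noteq> 0 \<and> ah j \<noteq> 0"
    using m_min by (auto simp: a_def ah_def c_def N_def)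
  moreover have "Min ((\<lambda>j. cmod (a j)) ` {1..n}) = m_min"
    unfolding cmod_a using m_min assms by (intro Min_scaled_binomial_coeffs) (auto simp: N_def)
  moreover have "cmod (dm_fourier n ah (\<lambda>j. real j * \<tau> - \<tau>) (\<omega> q)
                        - dm_fourier n a (\<lambda>j. - (real j * \<tau>)) (\<omega> q)) < \<sigma>"
    if "q \<in> {1..M}" for q
  proof -
    have "\<tau> \<ge> 0" using assms(1) by (simp add: \<tau>_def)
    moreover have "\<bar>\<omega> q\<bar> \<le> \<Omega>"
      unfolding \<omega>_def by (rule abs_equispaced_grid_le[OF assms(1,2) that])
    ultimately have "cmod (dm_fourier n ah (\<lambda>j. real j * \<tau> - \<tau>) (\<omega> q)
                        - dm_fourier n a (\<lambda>j. - (real j * \<tau>)) (\<omega> q)) \<le> m_min * (\<tau> * \<Omega>) ^ N"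
      using cmod_dm_fourier_diff_binomial_pair_le[of n \<tau> "\<omega> q" \<Omega> "of_real m_min"] assms m_min
      by (simp add: a_def ah_def c_def N_def)
    also have "\<dots> < \<sigma>"
    proof -
      have "exp (- 3 / 2 :: real) < 1" by simp
      then have "0.49 * exp (- 3 / 2 :: real) < 1" by (simp del: exp_less_one_iff)
      moreover have "\<tau> * \<Omega> = 0.49 * exp (- 3 / 2) * (\<sigma> / m_min) powr (1 / real N)"
        using assms(1) N(2) by (simp add: \<tau>_def)
      ultimately show ?thesis
        using assms(3) m_min N(1) by (simp only:) (rule mult_power_scaled_root_less, simp_all)
    qed
    finally show ?thesis .
  qed
  then have "meas_dist_inf M \<omega> n ah (\<lambda>j. real j * \<tau> - \<tau>) a (\<lambda>j. - (real j * \<tau>)) < \<sigma>"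
    unfolding meas_dist_inf_def using assms(2) by (subst Max_less_iff) auto
  ultimately show ?thesis by blast
qed

end
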